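(* Let $K\geq 1$ and let $r_{ij}\geq 0$, $i,j\in\{1,2,3,4\}$, be real numbers such that $r_{ij}=r_{ji}$ and $r_{ij}\leq K(r_{ik}+r_{jk})$ for all $i,j,k\in\{1,2,3,4\}$. Then $$\sqrt{r_{12}r_{34}}\leq K\big(\sqrt{r_{13}r_{24}}+\sqrt{r_{14}r_{23}}\big).$$ In particular, $$r_{12}r_{34}\leq 2K^2(r_{13}r_{24}+r_{14}r_{23})\leq (2K)^2\max\{r_{13}r_{24},\ r_{14}r_{23}\}.$$ *)

theory Defs
  imports Complex_Main
begin

end

theory Submission
  imports Defs
begin

text \<open>Write \<open>a = r\<^sub>1\<^sub>2, b = r\<^sub>3\<^sub>4\<close> and \<open>c, d, e, f\<close> for \<open>r\<^sub>1\<^sub>3, r\<^sub>2\<^sub>4, r\<^sub>1\<^sub>4, r\<^sub>2\<^sub>3\<close>.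
  The quasi-triangle inequality through the two remaining points gives
  \<open>a \<le> K min (c + f) (d + e)\<close> and \<open>b \<le> K min (c + e) (d + f)\<close>. Ordering
  \<open>c \<le> d\<close> and \<open>e \<le> f\<close>, the second minimum is \<open>c + e\<close>, and
  \<open>(c + e) min (c + f) (d + e) \<le> c (d + e) + e (c + f) = cd + ef + 2ce\<close>,
  which is at most \<open>(\<surd>(cd) + \<surd>(ef))\<^sup>2\<close> because \<open>c \<le> \<surd>(cd)\<close> and \<open>e \<le> \<surd>(ef)\<close>.
  The two weaker forms follow from \<open>(\<surd>x + \<surd>y)\<^sup>2 \<le> 2 (x + y) \<le> 4 max x y\<close>.\<close>

lemma min_sum_mult_le_sqrt_sum_sq_ordered:
  fixes c d e f :: real
  assumes "0 \<le> c" "c \<le> d" "0 \<le> e" "e \<le> f"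
  shows "min (c + f) (d + e) * min (c + e) (d + f) \<le> (sqrt (c * d) + sqrt (e * f))\<^sup>2"
proof -
  have "min (c + f) (d + e) * min (c + e) (d + f) = c * min (c + f) (d + e) + e * min (c + f) (d + e)"
    using assms by (simp add: algebra_simps)
  also have "\<dots> \<le> c * (d + e) + e * (c + f)"
    using assms by (intro add_mono mult_left_mono) auto
  also have "\<dots> = c * d + e * f + 2 * (c * e)"
    by (simp add: algebra_simps)
  also have "\<dots> \<le> c * d + e * f + 2 * (sqrt (c * d) * sqrt (e * f))"
  proof -
    have "c \<le> sqrt (c * d)" "e \<le> sqrt (e * f)"
      using assms real_sqrt_le_mono[of "c * c" "c * d"] real_sqrt_le_mono[of "e * e" "e * f"]
      by (auto simp: mult_left_mono)
    then show ?thesis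
      using assms by (simp add: mult_mono)
  qed
  also have "\<dots> = (sqrt (c * d) + sqrt (e * f))\<^sup>2"
    using assms by (simp add: power2_eq_square algebra_simps real_sqrt_mult)
  finally show ?thesis .
qed

lemma min_sum_mult_le_sqrt_sum_sq:
  fixes c d e f :: real
  assumes "0 \<le> c" "0 \<le> d" "0 \<le> e" "0 \<le> f"
  shows "min (c + f) (d + e) * min (c + e) (d + f) \<le> (sqrt (c * d) + sqrt (e * f))\<^sup>2"
  using assms
proof (induct c d rule: linorder_wlog)
  case (le c d)
  then show ?case
  proof (induct e f rule: linorder_wlog)
    case (le e f)
    then show ?case
      by (rule_tac min_sum_mult_le_sqrt_sum_sq_ordered) auto
  next
    case (sym e f)
    then show ?case by (simp add: ac_simps)
  qed
next
  case (sym c d)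
  then show ?case by (simp add: ac_simps)
qed

lemma sqrt_mult_le_quasi_metric:
  fixes K :: real and r :: "'a \<Rightarrow> 'a \<Rightarrow> real"
  assumes K: "0 \<le> K"
    and nonneg: "\<And>i j. i \<in> S \<Longrightarrow> j \<in> S \<Longrightarrow> 0 \<le> r i j"
    and sym: "\<And>i j. i \<in> S \<Longrightarrow> j \<in> S \<Longrightarrow> r i j = r j i"
    and qtri: "\<And>i j k. i \<in> S \<Longrightarrow> j \<in> S \<Longrightarrow> k \<in> S \<Longrightarrow> r i j \<le> K * (r i k + r j k)"
    and S: "x \<in> S" "y \<in> S" "z \<in> S" "w \<in> S"
  shows "sqrt (r x y * r z w) \<le> K * (sqrt (r x z * r y w) + sqrt (r x w * r y z))"
proof -
  let ?m1 = "min (r x z + r y z) (r y w + r x w)"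
  let ?m2 = "min (r x z + r x w) (r y w + r y z)"
  have "r x y \<le> K * ?m1"
    using qtri[of x y z] qtri[of x y w] sym[of w y] S by (simp add: add.commute)
  moreover have "r z w \<le> K * ?m2"
    using qtri[of z w x] qtri[of z w y] sym[of z x] sym[of w x] sym[of z y] sym[of w y] S
    by (simp add: add.commute)
  moreover have "0 \<le> K * ?m1" "0 \<le> r z w"
    using K nonneg S by auto
  ultimately have "r x y * r z w \<le> (K * ?m1) * (K * ?m2)"
    by (intro mult_mono) auto
  also have "\<dots> = K\<^sup>2 * (?m1 * ?m2)"
    by (simp add: power2_eq_square algebra_simps)
  also have "\<dots> \<le> K\<^sup>2 * (sqrt (r x z * r y w) + sqrt (r x w * r y z))\<^sup>2"
    using nonneg S by (intro mult_left_mono min_sum_mult_le_sqrt_sum_sq) auto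
  finally have "r x y * r z w \<le> (K * (sqrt (r x z * r y w) + sqrt (r x w * r y z)))\<^sup>2"
    by (simp add: power_mult_distrib)
  then show ?thesis
    using K nonneg S real_le_lsqrt by auto
qed

lemma sqrt_add_sq_le:
  fixes x y :: real
  assumes "0 \<le> x" "0 \<le> y"
  shows "(sqrt x + sqrt y)\<^sup>2 \<le> 2 * (x + y)"
  using assms sum_squares_bound[of "sqrt x" "sqrt y"]
  by (simp add: power2_eq_square algebra_simps real_sqrt_mult)

theorem lemma3p4:
  fixes K :: real and r :: "nat \<Rightarrow> nat \<Rightarrow> real"
  assumes K: "K \<ge> 1"
    and nonneg: "\<And>i j. i \<in> {1..4} \<Longrightarrow> j \<in> {1..4} \<Longrightarrow> r i j \<ge> 0"
    and sym: "\<And>i j. i \<in> {1..4} \<Longrightarrow> j \<in> {1..4} \<Longrightarrow> r i j = r j i"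
    and qtri: "\<And>i j k. i \<in> {1..4} \<Longrightarrow> j \<in> {1..4} \<Longrightarrow> k \<in> {1..4} \<Longrightarrow>
                 r i j \<le> K * (r i k + r j k)"
  shows "sqrt (r 1 2 * r 3 4) \<le> K * (sqrt (r 1 3 * r 2 4) + sqrt (r 1 4 * r 2 3))
         \<and> r 1 2 * r 3 4 \<le> 2 * K^2 * (r 1 3 * r 2 4 + r 1 4 * r 2 3)
         \<and> 2 * K^2 * (r 1 3 * r 2 4 + r 1 4 * r 2 3)
             \<le> (2 * K)^2 * max (r 1 3 * r 2 4) (r 1 4 * r 2 3)"
proof -
  let ?p = "r 1 3 * r 2 4" and ?q = "r 1 4 * r 2 3"
  have pq: "0 \<le> ?p" "0 \<le> ?q"
    using nonneg by simp_all
  have ptolemy: "sqrt (r 1 2 * r 3 4) \<le> K * (sqrt ?p + sqrt ?q)"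
    by (rule sqrt_mult_le_quasi_metric[where S = "{1..4}", OF _ nonneg sym qtri]) (use K in auto)
  have "r 1 2 * r 3 4 \<le> (K * (sqrt ?p + sqrt ?q))\<^sup>2"
    using power_mono[OF ptolemy, of 2] nonneg[of 1 2] nonneg[of 3 4] by simp
  also have "\<dots> \<le> K\<^sup>2 * (2 * (?p + ?q))"
    unfolding power_mult_distrib using pq by (intro mult_left_mono sqrt_add_sq_le) auto
  finally have "r 1 2 * r 3 4 \<le> 2 * K^2 * (?p + ?q)"
    by (simp only: ac_simps)
  moreover have "2 * K^2 * (?p + ?q) \<le> 2 * K^2 * (2 * max ?p ?q)"
    by (intro mult_left_mono) auto
  ultimately show ?thesis
    using ptolemy by (simp add: power_mult_distrib)
qed

end
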